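(* There is an absolute constant $\alpha$ such that for every rule $\mathcal{R}$, every finite $X\subseteq\mathbb{R}^d$, all $k\ge2,\ell\ge1$, and every optimal cluster $K$, when general $k$-means++ with rule $\mathcal{R}$ is run on $X$ with parameters $k,\ell$, we have $\mathbb{E}[\mathrm{HIT}(K)]\le\alpha\,\ell\,k^{1-1/\ell}$.
   Context: $\phi(x,C)=\min_{c\in C}\|x-c\|_2^2$ ($\phi(x,\emptyset)=\infty$), $\phi(Y,C)=\sum_{x\in Y}\phi(x,C)$. A rule $\mathcal{R}$ selects one of $\ell$ given candidate points (given access to $X$, current centers, $k$, $\ell$). General $k$-means++ with rule $\mathcal{R}$: $C_0=\emptyset$; sample $c_1^1,\dots,c_1^\ell$ independently uniformly from $X$, $\mathcal{R}$ selects $c_1$ among them, $C_1=\{c_1\}$; for $i=1,\dots,k-1$ sample $c_{i+1}^1,\dots,c_{i+1}^\ell\in X$ independently with $\Pr[c_{i+1}^j=x]=\phi(x,C_i)/\phi(X,C_i)$, $\mathcal{R}$ selects $c_{i+1}$ among them, $C_{i+1}=C_i\cup\{c_{i+1}\}$. An optimal cluster $K$ is the set of points of $X$ whose closest center in a fixed optimal $k$-means solution is a given center; $\mu(K)$ is its centroid and $\phi^*(K)=\phi(K,\{\mu(K)\})$. $K$ is covered w.r.t. $C$ if $K\cap C\neq\emptyset$, solved w.r.t. $C$ if $\phi(K,C)\le10^5\phi^*(K)$. $\mathrm{HIT}(K)=\sum_{i=0}^{k-1}\sum_{j=1}^\ell \mathbf{1}[c_{i+1}^j\in K$ and $K$ is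 neither covered nor solved w.r.t. $C_i]$. *)

theory Defs
  imports "HOL-Probability.Probability"
begin

text \<open>Points of R^d are represented as functions nat => real vanishing outside {..<d},
  so that the dimension d can be quantified inside the statement.\<close>

type_synonym pt = "nat \<Rightarrow> real"

definition in_Rd :: "nat \<Rightarrow> pt \<Rightarrow> bool" where
  "in_Rd d x \<longleftrightarrow> (\<forall>i\<ge>d. x i = 0)"

definition sqd :: "nat \<Rightarrow> pt \<Rightarrow> pt \<Rightarrow> real" where
  "sqd d x y = (\<Sum>i<d. (x i - y i)^2)"

definition phi_pt :: "nat \<Rightarrow> pt \<Rightarrow> pt set \<Rightarrow> real" where
  "phi_pt d x C = Min (sqd d x ` C)"

definition phi :: "nat \<Rightarrow> pt set \<Rightarrow> pt set \<Rightarrow> real" where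
  "phi d Y C = (\<Sum>x\<in>Y. phi_pt d x C)"

definition opt_solution :: "nat \<Rightarrow> pt set \<Rightarrow> nat \<Rightarrow> pt set \<Rightarrow> bool" where
  "opt_solution d X k Opt \<longleftrightarrow> finite Opt \<and> Opt \<noteq> {} \<and> card Opt \<le> k \<and> (\<forall>c\<in>Opt. in_Rd d c) \<and>
     (\<forall>C. finite C \<and> C \<noteq> {} \<and> card C \<le> k \<and> (\<forall>c\<in>C. in_Rd d c) \<longrightarrow> phi d X Opt \<le> phi d X C)"

text \<open>An optimal cluster: the points of X assigned to a given center ctr of a fixed optimal
  solution Opt, each point being assigned to one of its closest centers (asg breaks ties).\<close>
definition opt_cluster :: "nat \<Rightarrow> pt set \<Rightarrow> nat \<Rightarrow> pt set \<Rightarrow> bool" where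
  "opt_cluster d X k K \<longleftrightarrow> (\<exists>Opt asg ctr. opt_solution d X k Opt \<and>
     (\<forall>x\<in>X. asg x \<in> Opt \<and> sqd d x (asg x) = phi_pt d x Opt) \<and>
     ctr \<in> Opt \<and> K = {x\<in>X. asg x = ctr})"

definition centroid :: "nat \<Rightarrow> pt set \<Rightarrow> pt" where
  "centroid d K = (\<lambda>i. if i < d then (\<Sum>x\<in>K. x i) / real (card K) else 0)"

definition phi_star :: "nat \<Rightarrow> pt set \<Rightarrow> real" where
  "phi_star d K = (\<Sum>x\<in>K. sqd d x (centroid d K))"

definition covered :: "pt set \<Rightarrow> pt set \<Rightarrow> bool" where
  "covered K C \<longleftrightarrow> K \<inter> C \<noteq> {}"

text \<open>phi(K,{}) = infinity, so K is never solved w.r.t. the empty set.\<close>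
definition solved :: "nat \<Rightarrow> pt set \<Rightarrow> pt set \<Rightarrow> bool" where
  "solved d K C \<longleftrightarrow> C \<noteq> {} \<and> phi d K C \<le> 10^5 * phi_star d K"

text \<open>When phi(X,C) = 0 the D^2
  distribution is undefined; we then (by convention) sample uniformly -- this does not affect HIT,
  since then every nonempty cluster is covered.\<close>
definition d2_dist :: "nat \<Rightarrow> pt set \<Rightarrow> pt set \<Rightarrow> pt pmf" where
  "d2_dist d X C = (if C = {} \<or> phi d X C = 0 then pmf_of_set X
     else embed_pmf (\<lambda>x. if x \<in> X then phi_pt d x C / phi d X C else 0))"

fun iid_list :: "nat \<Rightarrow> 'a pmf \<Rightarrow> 'a list pmf" where
  "iid_list 0 p = return_pmf []"
| "iid_list (Suc n) p = bind_pmf p (\<lambda>x. map_pmf (\<lambda>xs. x # xs) (iid_list n p))"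

type_synonym rule = "pt set \<Rightarrow> pt set \<Rightarrow> nat \<Rightarrow> nat \<Rightarrow> pt list \<Rightarrow> pt"

definition valid_rule :: "rule \<Rightarrow> pt set \<Rightarrow> nat \<Rightarrow> nat \<Rightarrow> bool" where
  "valid_rule R X k l \<longleftrightarrow> (\<forall>C cs. length cs = l \<longrightarrow> R X C k l cs \<in> set cs)"

text \<open>One round: state is (current centers, HIT count so far).\<close>
definition kpp_step :: "nat \<Rightarrow> rule \<Rightarrow> pt set \<Rightarrow> nat \<Rightarrow> nat \<Rightarrow> pt set \<Rightarrow> pt set \<times> nat \<Rightarrow> (pt set \<times> nat) pmf" where
  "kpp_step d R X k l K s = (case s of (C, h) \<Rightarrow>
     map_pmf (\<lambda>cs. (insert (R X C k l cs) C,
                    h + (if covered K C \<or> solved d K C then 0 else length (filter (\<lambda>c. c \<in> K) cs))))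
       (iid_list l (d2_dist d X C)))"

fun kpp_run :: "nat \<Rightarrow> rule \<Rightarrow> pt set \<Rightarrow> nat \<Rightarrow> nat \<Rightarrow> pt set \<Rightarrow> nat \<Rightarrow> (pt set \<times> nat) pmf" where
  "kpp_run d R X k l K 0 = return_pmf ({}, 0)"
| "kpp_run d R X k l K (Suc i) = bind_pmf (kpp_run d R X k l K i) (kpp_step d R X k l K)"

definition expected_HIT :: "nat \<Rightarrow> rule \<Rightarrow> pt set \<Rightarrow> nat \<Rightarrow> nat \<Rightarrow> pt set \<Rightarrow> real" where
  "expected_HIT d R X k l K = measure_pmf.expectation (kpp_run d R X k l K k) (\<lambda>s. real (snd s))"

end

theory Submission
  imports Defs
begin

text \<open>Consider the potential HIT(K) + B [K is neither covered nor solved] with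
  B = l k^(1 - 1/l). In a round where K is still unsettled and has D^2 mass p, HIT(K) grows in
  expectation by l p, while with probability p^l all l candidates lie in K, so that the selected
  center covers K and the potential drops by B. Since p \<le> t + p^l / t^(l-1) for every t > 0,
  the choice t = k^(-1/l) bounds the expected growth of the potential by l k^(-1/l) per round.
  After k rounds, E[HIT(K)] \<le> B + k l k^(-1/l) = 2 l k^(1 - 1/l).\<close>

lemma set_pmf_iid_list_length: "xs \<in> set_pmf (iid_list n p) \<Longrightarrow> length xs = n"
  by (induction n arbitrary: xs) auto

lemma nn_integral_iid_list_count:
  "(\<integral>\<^sup>+xs. of_nat (length (filter P xs)) \<partial>iid_list n p) = of_nat n * emeasure p {x. P x}"
proof (induction n)
  case (Suc n)
  have "(\<integral>\<^sup>+xs. of_nat (length (filter P xs)) \<partial>iid_list (Suc n) p)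
      = (\<integral>\<^sup>+x. \<integral>\<^sup>+xs. indicator {x. P x} x + of_nat (length (filter P xs)) \<partial>iid_list n p \<partial>p)"
    by (auto intro!: nn_integral_cong simp: indicator_def)
  also have "\<dots> = (\<integral>\<^sup>+x. indicator {x. P x} x + of_nat n * emeasure p {x. P x} \<partial>p)"
    by (simp add: nn_integral_add measure_pmf.emeasure_space_1 Suc)
  also have "\<dots> = of_nat (Suc n) * emeasure p {x. P x}"
    by (simp add: nn_integral_add measure_pmf.emeasure_space_1 algebra_simps)
  finally show ?case .
qed simp

lemma emeasure_iid_list_all_in:
  "emeasure (iid_list n p) {xs. set xs \<subseteq> A} = emeasure p A ^ n"
proof (induction n)
  case (Suc n)
  have "emeasure (iid_list (Suc n) p) {xs. set xs \<subseteq> A}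
      = (\<integral>\<^sup>+x. indicator A x * emeasure (iid_list n p) {xs. set xs \<subseteq> A} \<partial>p)"
    by (auto intro!: nn_integral_cong simp: vimage_def indicator_def)
  also have "\<dots> = emeasure p A ^ Suc n"
    by (simp add: Suc nn_integral_multc)
  finally show ?case .
qed simp

lemma le_add_power_div_power:
  fixes p t :: real
  assumes "0 \<le> p" "0 < t" "1 \<le> l"
  shows "p \<le> t + p ^ l / t ^ (l - 1)"
proof (cases "p \<le> t")
  case True
  then show ?thesis using assms by (simp add: add_increasing2)
next
  case False
  then have "t ^ (l - 1) \<le> p ^ (l - 1)"
    using assms by (intro power_mono) auto
  then have "p * t ^ (l - 1) \<le> p ^ l"
    using assms by (metis mult_left_mono power_eq_if not_one_le_zero)
  then have "p \<le> p ^ l / t ^ (l - 1)"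
    using assms by (simp add: pos_le_divide_eq)
  then show ?thesis using assms by linarith
qed

lemma le_powr_add_powr_mult_power:
  fixes p k :: real
  assumes "0 \<le> p" "0 < k" "1 \<le> l"
  shows "p \<le> k powr (- 1 / l) + k powr (1 - 1 / l) * p ^ l"
proof -
  define t where "t = k powr (- 1 / l)"
  have "t ^ (l - 1) = k powr (real (l - 1) * (- 1 / l))"
    using assms by (simp add: t_def powr_power)
  then have "t ^ (l - 1) * k powr (1 - 1 / l) = k powr (real (l - 1) * (- 1 / l) + (1 - 1 / l))"
    by (simp only: powr_add)
  also have "real (l - 1) * (- 1 / l) + (1 - 1 / l) = 0"
    using assms by (simp add: of_nat_diff field_simps)
  finally have "k powr (1 - 1 / l) = 1 / t ^ (l - 1)"
    using assms by (simp add: t_def field_simps)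
  then show ?thesis
    using le_add_power_div_power[of p t l] assms by (simp add: t_def)
qed

definition unsettled :: "nat \<Rightarrow> pt set \<Rightarrow> pt set \<Rightarrow> bool" where
  "unsettled d K C \<longleftrightarrow> \<not> covered K C \<and> \<not> solved d K C"

lemma phi_insert_le: "finite C \<Longrightarrow> C \<noteq> {} \<Longrightarrow> phi d K (insert c C) \<le> phi d K C"
  unfolding phi_def phi_pt_def by (intro sum_mono Min_antimono) auto

lemma unsettled_insertD: "finite C \<Longrightarrow> unsettled d K (insert c C) \<Longrightarrow> unsettled d K C"
  using phi_insert_le[of C d K c] unfolding unsettled_def covered_def solved_def by force

definition kpp_potential :: "nat \<Rightarrow> pt set \<Rightarrow> real \<Rightarrow> pt set \<times> nat \<Rightarrow> real" where
  "kpp_potential d K B s = real (snd s) + (if unsettled d K (fst s) then B else 0)"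

lemma kpp_potential_after_round_le:
  assumes "valid_rule R X k l" "length cs = l" "0 \<le> B"
  shows "kpp_potential d K B (insert (R X C k l cs) C, h + length (filter (\<lambda>c. c \<in> K) cs))
    \<le> real h + real (length (filter (\<lambda>c. c \<in> K) cs)) + B * indicator (- {cs. set cs \<subseteq> K}) cs"
proof -
  have "R X C k l cs \<in> set cs"
    using assms(1,2) unfolding valid_rule_def by blast
  then have "set cs \<subseteq> K \<Longrightarrow> covered K (insert (R X C k l cs) C)"
    unfolding covered_def by auto
  then show ?thesis
    using \<open>0 \<le> B\<close> by (auto simp: kpp_potential_def unsettled_def indicator_def)
qed

lemma nn_integral_kpp_step_potential:
  assumes "valid_rule R X k l" "finite C" "0 \<le> B" "0 \<le> e"
    and increment: "\<And>p. 0 \<le> p \<Longrightarrow> real l * p \<le> e + B * p ^ l"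
  shows "(\<integral>\<^sup>+s. kpp_potential d K B s \<partial>kpp_step d R X k l K (C, h))
           \<le> ennreal (kpp_potential d K B (C, h) + e)"
proof (cases "unsettled d K C")
  case False
  then have "kpp_step d R X k l K (C, h)
      = map_pmf (\<lambda>cs. (insert (R X C k l cs) C, h)) (iid_list l (d2_dist d X C))"
    by (simp add: kpp_step_def unsettled_def)
  moreover have "\<not> unsettled d K (insert c C)" for c
    using False unsettled_insertD[OF \<open>finite C\<close>] by blast
  ultimately show ?thesis
    using False \<open>0 \<le> e\<close>
    by (simp add: kpp_potential_def measure_pmf.emeasure_space_1 ennreal_leI)
next
  case True
  define D where "D = d2_dist d X C"
  define p where "p = measure D K"
  define cnt where "cnt cs = length (filter (\<lambda>c. c \<in> K) cs)" for cs :: "pt list"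
  define not_all_in_K where "not_all_in_K = - {cs. set cs \<subseteq> K}"
  have "0 \<le> p" "p ^ l \<le> 1"
    by (simp_all add: p_def power_le_one)
  have "measure (iid_list l D) {cs. set cs \<subseteq> K} = p ^ l"
    using emeasure_iid_list_all_in[of l D K]
    by (simp add: p_def measure_pmf.emeasure_eq_measure ennreal_power)
  then have not_all_in: "measure (iid_list l D) not_all_in_K = 1 - p ^ l"
    using measure_pmf.prob_compl[of "{cs. set cs \<subseteq> K}" "iid_list l D"]
    by (simp add: not_all_in_K_def Compl_eq_Diff_UNIV)
  have "(\<integral>\<^sup>+s. kpp_potential d K B s \<partial>kpp_step d R X k l K (C, h))
      = (\<integral>\<^sup>+cs. kpp_potential d K B (insert (R X C k l cs) C, h + cnt cs) \<partial>iid_list l D)"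
    using True by (simp add: kpp_step_def unsettled_def D_def cnt_def)
  also have "\<dots> \<le> (\<integral>\<^sup>+cs. real h + real (cnt cs) + B * indicator not_all_in_K cs \<partial>iid_list l D)"
    using kpp_potential_after_round_le[OF assms(1) set_pmf_iid_list_length assms(3)]
    by (intro nn_integral_mono_AE AE_pmfI ennreal_leI) (simp add: cnt_def not_all_in_K_def)
  also have "\<dots> = ennreal h + of_nat l * emeasure D K + ennreal B * emeasure (iid_list l D) not_all_in_K"
    using nn_integral_iid_list_count[of l D "\<lambda>c. c \<in> K"] \<open>0 \<le> B\<close>
    by (simp add: nn_integral_add ennreal_mult' ennreal_indicator nn_integral_cmult_indicator
        measure_pmf.emeasure_space_1 cnt_def ennreal_of_nat_eq_real_of_nat)
  also have "\<dots> = ennreal (h + real l * p + B * (1 - p ^ l))"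
    using not_all_in \<open>0 \<le> B\<close> \<open>p ^ l \<le> 1\<close>
    by (simp add: p_def measure_pmf.emeasure_eq_measure ennreal_plus ennreal_mult
        ennreal_of_nat_eq_real_of_nat)
  also have "\<dots> \<le> ennreal (kpp_potential d K B (C, h) + e)"
    using increment[OF \<open>0 \<le> p\<close>] True
    by (intro ennreal_leI) (simp add: kpp_potential_def algebra_simps)
  finally show ?thesis .
qed

lemma finite_centers_kpp_run: "s \<in> set_pmf (kpp_run d R X k l K n) \<Longrightarrow> finite (fst s)"
  by (induction n arbitrary: s) (auto simp: kpp_step_def)

lemma nn_integral_kpp_run_potential:
  assumes "valid_rule R X k l" "0 \<le> B" "0 \<le> e"
    and increment: "\<And>p. 0 \<le> p \<Longrightarrow> real l * p \<le> e + B * p ^ l"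
  shows "(\<integral>\<^sup>+s. kpp_potential d K B s \<partial>kpp_run d R X k l K n) \<le> ennreal (B + real n * e)"
proof (induction n)
  case 0
  show ?case by (simp add: kpp_potential_def)
next
  case (Suc n)
  have "(\<integral>\<^sup>+s. kpp_potential d K B s \<partial>kpp_run d R X k l K (Suc n))
      = (\<integral>\<^sup>+s. \<integral>\<^sup>+t. kpp_potential d K B t \<partial>kpp_step d R X k l K s \<partial>kpp_run d R X k l K n)"
    by simp
  also have "\<dots> \<le> (\<integral>\<^sup>+s. ennreal (kpp_potential d K B s) + ennreal e \<partial>kpp_run d R X k l K n)"
  proof (intro nn_integral_mono_AE AE_pmfI)
    fix s assume "s \<in> set_pmf (kpp_run d R X k l K n)"
    then have "finite (fst s)" by (rule finite_centers_kpp_run)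
    then show "(\<integral>\<^sup>+t. kpp_potential d K B t \<partial>kpp_step d R X k l K s)
        \<le> ennreal (kpp_potential d K B s) + ennreal e"
      using nn_integral_kpp_step_potential[OF assms(1) _ assms(2-4), of "fst s" d K "snd s"] assms
      by (simp add: kpp_potential_def)
  qed
  also have "\<dots> = (\<integral>\<^sup>+s. kpp_potential d K B s \<partial>kpp_run d R X k l K n) + ennreal e"
    by (simp add: nn_integral_add measure_pmf.emeasure_space_1)
  also have "\<dots> \<le> ennreal (B + real n * e) + ennreal e"
    using Suc.IH by (rule add_right_mono)
  also have "\<dots> = ennreal (B + real (Suc n) * e)"
    using assms by (simp add: algebra_simps ennreal_plus[symmetric] del: ennreal_plus)
  finally show ?case .
qed

lemma expected_HIT_le:
  assumes "valid_rule R X k l" "0 \<le> B" "0 \<le> e"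
    and increment: "\<And>p. 0 \<le> p \<Longrightarrow> real l * p \<le> e + B * p ^ l"
  shows "expected_HIT d R X k l K \<le> B + real k * e"
proof -
  have "(\<integral>\<^sup>+s. real (snd s) \<partial>kpp_run d R X k l K k)
      \<le> (\<integral>\<^sup>+s. kpp_potential d K B s \<partial>kpp_run d R X k l K k)"
    using \<open>0 \<le> B\<close> by (intro nn_integral_mono ennreal_leI) (simp add: kpp_potential_def)
  also have "\<dots> \<le> ennreal (B + real k * e)"
    by (rule nn_integral_kpp_run_potential[OF assms])
  finally show ?thesis
    unfolding expected_HIT_def using assms
    by (subst integral_eq_nn_integral) (auto intro!: enn2real_leI)
qed

theorem lemmaB2:
  shows "\<exists>\<alpha>::real. \<forall>d (R::rule) X k l K.
     finite X \<and> X \<noteq> {} \<and> (\<forall>x\<in>X. in_Rd d x) \<and> k \<ge> 2 \<and> l \<ge> 1 \<and>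
     valid_rule R X k l \<and> opt_cluster d X k K \<longrightarrow>
     expected_HIT d R X k l K \<le> \<alpha> * real l * real k powr (1 - 1 / real l)"
proof (intro exI[of _ 2] allI impI)
  fix d R X k l K
  assume "finite X \<and> X \<noteq> {} \<and> (\<forall>x\<in>X. in_Rd d x) \<and> k \<ge> 2 \<and> l \<ge> 1 \<and>
     valid_rule R X k l \<and> opt_cluster d X k K"
  then have rule: "valid_rule R X k l" and k: "0 < real k" and l: "1 \<le> l" by auto
  define B where "B = real l * real k powr (1 - 1 / real l)"
  define e where "e = real l * real k powr (- 1 / real l)"
  have increment: "real l * p \<le> e + B * p ^ l" if "0 \<le> p" for p
    using mult_left_mono[OF le_powr_add_powr_mult_power[OF that k l], of "real l"]
    by (simp add: B_def e_def algebra_simps)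
  have "expected_HIT d R X k l K \<le> B + real k * e"
    by (rule expected_HIT_le[OF rule _ _ increment]) (simp_all add: B_def e_def)
  also have "real k * e = B"
    using k by (simp add: B_def e_def powr_diff powr_minus_divide field_simps)
  finally show "expected_HIT d R X k l K \<le> 2 * real l * real k powr (1 - 1 / real l)"
    by (simp add: B_def)
qed

end
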